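(* Let $\mu_1,\mu_2,\beta>0$, $p>2$, $c_1,c_2>0$ with $c_1+c_2<4^{\frac{p-2}{2p-3}}\big[\frac{p(p-2)^{p-2}}{K_{2p}\mu_0(p-1)^p}\big]^{\frac1{2p-3}}$, $\mu_0=\max\{\mu_1+\beta,\mu_2+\beta\}$. Then $Q(u)+Q(v)<\frac{p-1}{p-2}\frac{(c_1+c_2)^2}4$ for all $(u,v)\in\Omega^+(c_1,c_2)$, and $Q(u)+Q(v)>\frac{p-1}{p-2}\frac{(c_1+c_2)^2}4$ for all $(u,v)\in\Omega^-(c_1,c_2)$.
   Context: $E:=\{u\in H^1(\mathbb{R}^2):\int\log(1+|x|^2)u^2dx<\infty\}$; $S(c):=\{w\in E:\int w^2dx=c\}$. $Q(u)=\int|\nabla u|^2$, $R(u,v)=\mu_1\int|u|^{2p}+\mu_2\int|v|^{2p}+2\beta\int|uv|^p$, $W_0(u,v)=\iint\log|x-y|(u^2(x)+v^2(x))(u^2(y)+v^2(y))dxdy$. For $(u,v)\in S(c_1)\times S(c_2)$ and $t>0$, $F_{u,v}(t)=\frac{t^2}2(Q(u)+Q(v))+\frac14[W_0(u,v)-(c_1+c_2)^2\log t]-\frac{t^{2p-2}}{2p}R(u,v)$. $\Omega^{\pm}(c_1,c_2)$ is the set of $(u,v)\in S(c_1)\times S(c_2)$ with $F'_{u,v}(1)=0$ and $\pm F''_{u,v}(1)>0$. $K_{2p}$ is the best constant in $\|u\|_{2p}^{2p}\le K_{2p}\|\nabla u\|_2^{2p-2}\|u\|_2^2$ on $H^1(\mathbb{R}^2)$.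 *)

theory Defs
  imports "HOL-Analysis.Analysis"
begin

type_synonym pt = "real ^ 2"

definition pderiv2 :: "(pt \<Rightarrow> real) \<Rightarrow> 2 \<Rightarrow> pt \<Rightarrow> real" where
  "pderiv2 f i x = frechet_derivative f (at x) (axis i 1)"

text \<open>C-infinity: all iterated partial derivatives exist and are differentiable everywhere.\<close>
definition smooth2 :: "(pt \<Rightarrow> real) \<Rightarrow> bool" where
  "smooth2 f \<longleftrightarrow> (\<exists>S. f \<in> S \<and> (\<forall>g\<in>S. (\<forall>x. g differentiable (at x)) \<and>
                        (\<forall>i. pderiv2 g i \<in> S)))"

definition test_fun :: "(pt \<Rightarrow> real) \<Rightarrow> bool" where
  "test_fun \<phi> \<longleftrightarrow> smooth2 \<phi> \<and> compact (closure {x. \<phi> x \<noteq> 0})"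

definition is_weak_grad :: "(pt \<Rightarrow> real) \<Rightarrow> (pt \<Rightarrow> pt) \<Rightarrow> bool" where
  "is_weak_grad u g \<longleftrightarrow> g \<in> borel_measurable lborel \<and>
     integrable lborel (\<lambda>x. (norm (g x))\<^sup>2) \<and>
     (\<forall>\<phi>. test_fun \<phi> \<longrightarrow> (\<forall>i.
        (\<integral>x. u x * pderiv2 \<phi> i x \<partial>lborel) = - (\<integral>x. g x $ i * \<phi> x \<partial>lborel)))"

definition H1 :: "(pt \<Rightarrow> real) set" where
  "H1 = {u. u \<in> borel_measurable lborel \<and> integrable lborel (\<lambda>x. (u x)\<^sup>2) \<and>
            (\<exists>g. is_weak_grad u g)}"

definition wgrad :: "(pt \<Rightarrow> real) \<Rightarrow> pt \<Rightarrow> pt" where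
  "wgrad u = (SOME g. is_weak_grad u g)"

definition E :: "(pt \<Rightarrow> real) set" where
  "E = {u \<in> H1. integrable lborel (\<lambda>x. ln (1 + (norm x)\<^sup>2) * (u x)\<^sup>2)}"

definition S :: "real \<Rightarrow> (pt \<Rightarrow> real) set" where
  "S c = {w \<in> E. (\<integral>x. (w x)\<^sup>2 \<partial>lborel) = c}"

definition Q :: "(pt \<Rightarrow> real) \<Rightarrow> real" where
  "Q u = (\<integral>x. (norm (wgrad u x))\<^sup>2 \<partial>lborel)"

definition R :: "real \<Rightarrow> real \<Rightarrow> real \<Rightarrow> real \<Rightarrow> (pt \<Rightarrow> real) \<Rightarrow> (pt \<Rightarrow> real) \<Rightarrow> real" where
  "R p \<mu>1 \<mu>2 \<beta> u v = \<mu>1 * (\<integral>x. \<bar>u x\<bar> powr (2*p) \<partial>lborel)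
      + \<mu>2 * (\<integral>x. \<bar>v x\<bar> powr (2*p) \<partial>lborel)
      + 2 * \<beta> * (\<integral>x. \<bar>u x * v x\<bar> powr p \<partial>lborel)"

definition W0 :: "(pt \<Rightarrow> real) \<Rightarrow> (pt \<Rightarrow> real) \<Rightarrow> real" where
  "W0 u v = (\<integral>x. (\<integral>y. ln (dist x y) * ((u x)\<^sup>2 + (v x)\<^sup>2) * ((u y)\<^sup>2 + (v y)\<^sup>2) \<partial>lborel) \<partial>lborel)"

definition F :: "real \<Rightarrow> real \<Rightarrow> real \<Rightarrow> real \<Rightarrow> real \<Rightarrow> real \<Rightarrow> (pt \<Rightarrow> real) \<Rightarrow> (pt \<Rightarrow> real) \<Rightarrow> real \<Rightarrow> real" where
  "F p \<mu>1 \<mu>2 \<beta> c1 c2 u v t =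
     t\<^sup>2 / 2 * (Q u + Q v) + 1/4 * (W0 u v - (c1 + c2)\<^sup>2 * ln t)
     - t powr (2*p - 2) / (2*p) * R p \<mu>1 \<mu>2 \<beta> u v"

definition Omega_plus where
  "Omega_plus p \<mu>1 \<mu>2 \<beta> c1 c2 = {(u, v). u \<in> S c1 \<and> v \<in> S c2 \<and>
     deriv (F p \<mu>1 \<mu>2 \<beta> c1 c2 u v) 1 = 0 \<and>
     deriv (deriv (F p \<mu>1 \<mu>2 \<beta> c1 c2 u v)) 1 > 0}"

definition Omega_minus where
  "Omega_minus p \<mu>1 \<mu>2 \<beta> c1 c2 = {(u, v). u \<in> S c1 \<and> v \<in> S c2 \<and>
     deriv (F p \<mu>1 \<mu>2 \<beta> c1 c2 u v) 1 = 0 \<and>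
     deriv (deriv (F p \<mu>1 \<mu>2 \<beta> c1 c2 u v)) 1 < 0}"

text \<open>Best Gagliardo-Nirenberg constant K_{2p} on H^1(R^2).\<close>
definition K :: "real \<Rightarrow> real" where
  "K p = Inf {k. \<forall>u\<in>H1. (\<integral>x. \<bar>u x\<bar> powr (2*p) \<partial>lborel)
                \<le> k * (sqrt (Q u)) powr (2*p - 2) * (\<integral>x. (u x)\<^sup>2 \<partial>lborel)}"

end

theory Submission
  imports Defs
begin

text \<open>At a critical point \<open>t = 1\<close> of the fibering map \<open>F\<^sub>u\<^sub>,\<^sub>v\<close>, the equation \<open>F'(1) = 0\<close>
  expresses the nonlinear term \<open>R(u,v)\<close> through \<open>Q(u) + Q(v)\<close> and the masses. Substituting
  it into \<open>F''(1)\<close> leaves \<open>F''(1) = 2(p-1)(c\<^sub>1+c\<^sub>2)\<^sup>2/4 - 2(p-2)(Q(u)+Q(v))\<close>, so the sign of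
  \<open>F''(1)\<close> decides on which side of \<open>(p-1)/(p-2) (c\<^sub>1+c\<^sub>2)\<^sup>2/4\<close> the kinetic energy lies.\<close>

lemma F_has_real_derivative:
  assumes "t > 0" "p \<noteq> 0"
  shows "(F p \<mu>1 \<mu>2 \<beta> c1 c2 u v has_real_derivative
           t * (Q u + Q v) - (c1 + c2)\<^sup>2 / (4 * t)
           - (p - 1) / p * t powr (2*p - 3) * R p \<mu>1 \<mu>2 \<beta> u v) (at t)"
    (is "(_ has_real_derivative ?F') _")
proof -
  have "(F p \<mu>1 \<mu>2 \<beta> c1 c2 u v has_real_derivative
          2 * t / 2 * (Q u + Q v) + 1/4 * (0 - (c1 + c2)\<^sup>2 * (1 / t))
          - (2*p - 2) * t powr (2*p - 2 - 1) / (2*p) * R p \<mu>1 \<mu>2 \<beta> u v) (at t)"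
    (is "(_ has_real_derivative ?D) _")
    unfolding F_def[abs_def] using assms by (auto intro!: derivative_eq_intros)
  moreover have "?D = ?F'"
    using assms by (simp add: field_simps)
  ultimately show ?thesis by (simp only:)
qed

lemma deriv_F:
  assumes "t > 0" "p \<noteq> 0"
  shows "deriv (F p \<mu>1 \<mu>2 \<beta> c1 c2 u v) t =
           t * (Q u + Q v) - (c1 + c2)\<^sup>2 / (4 * t)
           - (p - 1) / p * t powr (2*p - 3) * R p \<mu>1 \<mu>2 \<beta> u v"
  using F_has_real_derivative[OF assms] by (rule DERIV_imp_deriv)

lemma deriv2_F:
  assumes "t > 0" "p \<noteq> 0"
  shows "deriv (deriv (F p \<mu>1 \<mu>2 \<beta> c1 c2 u v)) t =
           Q u + Q v + (c1 + c2)\<^sup>2 / (4 * t\<^sup>2)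
           - (p - 1) / p * (2*p - 3) * t powr (2*p - 4) * R p \<mu>1 \<mu>2 \<beta> u v"
    (is "_ = ?F''")
proof -
  let ?A = "Q u + Q v" and ?D = "(c1 + c2)\<^sup>2"
  have "((\<lambda>s. s * ?A - ?D / (4 * s) - (p - 1) / p * s powr (2*p - 3) * R p \<mu>1 \<mu>2 \<beta> u v)
          has_real_derivative
          1 * ?A - (- (?D * (4 * 1)) / (4 * t * (4 * t)))
          - (p - 1) / p * ((2*p - 3) * t powr (2*p - 3 - 1)) * R p \<mu>1 \<mu>2 \<beta> u v) (at t)"
    (is "(?F' has_real_derivative ?D') _")
    using assms by (auto intro!: derivative_eq_intros)
  moreover have "?D' = ?F''"
    using assms by (simp add: field_simps power2_eq_square)
  ultimately have "(?F' has_real_derivative ?F'') (at t)" by (simp only:)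
  then have "(deriv (F p \<mu>1 \<mu>2 \<beta> c1 c2 u v) has_real_derivative ?F'') (at t)"
    by (rule has_field_derivative_transform_within_open[where S = "{0<..}"])
       (use assms in \<open>auto simp: deriv_F\<close>)
  then show ?thesis by (rule DERIV_imp_deriv)
qed

lemma deriv2_F_at_critical_point:
  assumes "deriv (F p \<mu>1 \<mu>2 \<beta> c1 c2 u v) 1 = 0" "p \<noteq> 0"
  shows "deriv (deriv (F p \<mu>1 \<mu>2 \<beta> c1 c2 u v)) 1 =
           2 * ((p - 1) * ((c1 + c2)\<^sup>2 / 4) - (p - 2) * (Q u + Q v))"
proof -
  let ?A = "Q u + Q v" and ?C = "(c1 + c2)\<^sup>2 / 4" and ?B = "(p - 1) / p * R p \<mu>1 \<mu>2 \<beta> u v"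
  have "?B = ?A - ?C"
    using assms deriv_F[of 1 p] by simp
  have "deriv (deriv (F p \<mu>1 \<mu>2 \<beta> c1 c2 u v)) 1 = ?A + ?C - (2*p - 3) * ?B"
    using assms(2) deriv2_F[of 1 p] by simp
  also have "\<dots> = ?A + ?C - (2*p - 3) * (?A - ?C)"
    unfolding \<open>?B = ?A - ?C\<close> ..
  also have "\<dots> = 2 * ((p - 1) * ?C - (p - 2) * ?A)"
    by (simp add: field_simps)
  finally show ?thesis .
qed

theorem lemma4p7:
  fixes p \<mu>1 \<mu>2 \<beta> c1 c2 :: real
  assumes "\<mu>1 > 0" "\<mu>2 > 0" "\<beta> > 0" "p > 2" "c1 > 0" "c2 > 0"
    and "c1 + c2 < 4 powr ((p - 2) / (2*p - 3)) *
           (p * (p - 2) powr (p - 2) / (K p * max (\<mu>1 + \<beta>) (\<mu>2 + \<beta>) * (p - 1) powr p))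
             powr (1 / (2*p - 3))"
  shows "(\<forall>(u, v) \<in> Omega_plus p \<mu>1 \<mu>2 \<beta> c1 c2.
            Q u + Q v < (p - 1) / (p - 2) * (c1 + c2)\<^sup>2 / 4)
       \<and> (\<forall>(u, v) \<in> Omega_minus p \<mu>1 \<mu>2 \<beta> c1 c2.
            Q u + Q v > (p - 1) / (p - 2) * (c1 + c2)\<^sup>2 / 4)"
proof (intro conjI ballI; clarify)
  have "p - 2 > 0" "p \<noteq> 0" using \<open>p > 2\<close> by simp_all
  fix u v
  let ?F = "F p \<mu>1 \<mu>2 \<beta> c1 c2 u v"
  {
    assume "(u, v) \<in> Omega_plus p \<mu>1 \<mu>2 \<beta> c1 c2"
    then have critical: "deriv ?F 1 = 0" and "deriv (deriv ?F) 1 > 0"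
      by (simp_all add: Omega_plus_def)
    then have "(p - 2) * (Q u + Q v) < (p - 1) * ((c1 + c2)\<^sup>2 / 4)"
      using deriv2_F_at_critical_point[OF critical \<open>p \<noteq> 0\<close>] by simp
    with \<open>p - 2 > 0\<close> show "Q u + Q v < (p - 1) / (p - 2) * (c1 + c2)\<^sup>2 / 4"
      by (simp add: field_simps)
  next
    assume "(u, v) \<in> Omega_minus p \<mu>1 \<mu>2 \<beta> c1 c2"
    then have critical: "deriv ?F 1 = 0" and "deriv (deriv ?F) 1 < 0"
      by (simp_all add: Omega_minus_def)
    then have "(p - 2) * (Q u + Q v) > (p - 1) * ((c1 + c2)\<^sup>2 / 4)"
      using deriv2_F_at_critical_point[OF critical \<open>p \<noteq> 0\<close>] by simp
    with \<open>p - 2 > 0\<close> show "Q u + Q v > (p - 1) / (p - 2) * (c1 + c2)\<^sup>2 / 4"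
      by (simp add: field_simps)
  }
qed

end
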